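(* Let $\kappa$ be a probability density on $\mathbb{R}^d$ with $|h_2(\kappa)|\le A_{\kappa,2}$, let $\theta\in(0,1)$, let $Z_1,\dots,Z_n\in\mathbb{R}^d$, and let $(a_1,\dots,a_n)$ be a probability vector with $a_i\ge\epsilon>0$ for all $i\in[n]$. Let $\tilde Z_n$ have density $\mu_{\tilde Z_n}=\frac1{\theta^d}\sum_{i=1}^n a_i\kappa_{\theta,Z_i}$, where $\kappa_{\theta,z}(x)=\kappa\left(\frac{x-z}{\theta}\right)$. Then \[ |h_2(\tilde Z_n)|\le A_{\kappa,2}+d\log\tfrac1\theta+2\log\tfrac1\epsilon. \]
   Context: $h_2(f)=-\log\int f^2$ is the second-order differential Rényi entropy; $h_2(\tilde Z_n)$ means $h_2(\mu_{\tilde Z_n})$. *)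

theory Defs
  imports "HOL-Analysis.Analysis"
begin

definition is_prob_density :: "('a::euclidean_space \<Rightarrow> real) \<Rightarrow> bool" where
  "is_prob_density f \<longleftrightarrow> f \<in> borel_measurable lborel \<and> (\<forall>x. 0 \<le> f x)
      \<and> integrable lborel f \<and> (LINT x|lborel. f x) = 1"

definition renyi2 :: "('a::euclidean_space \<Rightarrow> real) \<Rightarrow> real" where
  "renyi2 f = - ln (LINT x|lborel. (f x)\<^sup>2)"

definition kernel_shift :: "('a::euclidean_space \<Rightarrow> real) \<Rightarrow> real \<Rightarrow> 'a \<Rightarrow> 'a \<Rightarrow> real" where
  "kernel_shift \<kappa> \<theta> z x = \<kappa> ((x - z) /\<^sub>R \<theta>)"

end

theory Submission
  imports Defs
begin

(* Pointwise, a mixture g = sum_i a_i k_i of nonnegative kernels with weights a_i >= eps satisfies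
     eps * sum_i a_i k_i^2 <= sum_i (a_i k_i)^2 <= g^2 <= sum_i a_i k_i^2,
   the last step by Jensen. Each rescaled translate k_i has integral k_i^2 = theta^d * integral kappa^2,
   so integrating pins integral (g / theta^d)^2 between eps * M and M, where
   M = integral kappa^2 / theta^d. Taking logarithms, h_2 moves by at most d log(1/theta)
   away from h_2(kappa), and by at most log(1/eps) more. *)

lemma lborel_integrable_affine:
  fixes f :: "'a::euclidean_space \<Rightarrow> 'b::{banach, second_countable_topology}"
  assumes f: "integrable lborel f" and c: "c \<noteq> 0"
  shows "integrable lborel (\<lambda>x. f (t + c *\<^sub>R x))"
proof -
  have [measurable]: "f \<in> borel_measurable borel"
    using f by auto
  have "(\<integral>\<^sup>+x. norm (f x) \<partial>lborel)
      = ennreal (\<bar>c\<bar> ^ DIM('a)) * (\<integral>\<^sup>+x. norm (f (t + c *\<^sub>R x)) \<partial>lborel)"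
    by (subst lborel_affine[OF c, of t]) (simp add: nn_integral_density nn_integral_distr nn_integral_cmult)
  moreover have "(\<integral>\<^sup>+x. norm (f x) \<partial>lborel) < \<infinity>"
    using f unfolding integrable_iff_bounded by auto
  ultimately show ?thesis
    using c unfolding integrable_iff_bounded by (auto simp: ennreal_mult_less_top)
qed

lemma lborel_integral_affine:
  fixes f :: "'a::euclidean_space \<Rightarrow> 'b::{banach, second_countable_topology}"
  assumes f: "integrable lborel f" and c: "c \<noteq> 0"
  shows "(\<integral>x. f x \<partial>lborel) = (\<bar>c\<bar> ^ DIM('a)) *\<^sub>R (\<integral>x. f (t + c *\<^sub>R x) \<partial>lborel)"
  using f lborel_integrable_affine[OF f c, of t]
  by (subst lborel_affine[OF c, of t]) (simp add: integral_density integral_distr)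

lemma kernel_shift_affine:
  "kernel_shift f \<theta> z = (\<lambda>x. f (- (z /\<^sub>R \<theta>) + inverse \<theta> *\<^sub>R x))"
  unfolding kernel_shift_def by (simp add: scaleR_diff_right)

lemma integrable_kernel_shift:
  assumes "integrable lborel f" and "\<theta> \<noteq> 0"
  shows "integrable lborel (kernel_shift f \<theta> z)"
  unfolding kernel_shift_affine using assms by (intro lborel_integrable_affine) auto

lemma integral_kernel_shift:
  fixes f :: "'a::euclidean_space \<Rightarrow> real"
  assumes "integrable lborel f" and "\<theta> \<noteq> 0"
  shows "(\<integral>x. kernel_shift f \<theta> z x \<partial>lborel) = \<bar>\<theta>\<bar> ^ DIM('a) * (\<integral>x. f x \<partial>lborel)"
  using lborel_integral_affine[OF assms(1), of "inverse \<theta>" "- (z /\<^sub>R \<theta>)"] assms(2)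
  unfolding kernel_shift_affine by (simp add: power_inverse field_simps)

lemma kernel_shift_power2:
  "(kernel_shift f \<theta> z x)\<^sup>2 = kernel_shift (\<lambda>y. (f y)\<^sup>2) \<theta> z x"
  unfolding kernel_shift_def ..

lemma sum_power2_le_power2_sum:
  fixes u :: "'i \<Rightarrow> real"
  assumes "\<And>i. i \<in> S \<Longrightarrow> 0 \<le> u i"
  shows "(\<Sum>i\<in>S. (u i)\<^sup>2) \<le> (\<Sum>i\<in>S. u i)\<^sup>2"
proof -
  have "(\<Sum>i\<in>S. (u i)\<^sup>2) = (L2_set u S)\<^sup>2"
    by (simp add: L2_set_def sum_nonneg)
  also have "\<dots> \<le> (\<Sum>i\<in>S. u i)\<^sup>2"
    using assms by (intro power_mono L2_set_le_sum) auto
  finally show ?thesis .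
qed

lemma mixture_power2_bounds:
  fixes a u :: "'i \<Rightarrow> real"
  assumes S: "finite S" and eps: "0 \<le> \<epsilon>" and a_ge: "\<And>i. i \<in> S \<Longrightarrow> \<epsilon> \<le> a i"
    and a_sum: "(\<Sum>i\<in>S. a i) = 1" and u: "\<And>i. i \<in> S \<Longrightarrow> 0 \<le> u i"
  shows "\<epsilon> * (\<Sum>i\<in>S. a i * (u i)\<^sup>2) \<le> (\<Sum>i\<in>S. a i * u i)\<^sup>2"
    and "(\<Sum>i\<in>S. a i * u i)\<^sup>2 \<le> (\<Sum>i\<in>S. a i * (u i)\<^sup>2)"
proof -
  have a_nonneg: "0 \<le> a i" if "i \<in> S" for i
    using a_ge[OF that] eps by linarith
  have "\<epsilon> * (\<Sum>i\<in>S. a i * (u i)\<^sup>2) \<le> (\<Sum>i\<in>S. (a i * u i)\<^sup>2)"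
    unfolding sum_distrib_left power_mult_distrib mult.assoc[symmetric] power2_eq_square[of "a _"]
    using a_ge a_nonneg by (intro sum_mono mult_right_mono) auto
  also have "\<dots> \<le> (\<Sum>i\<in>S. a i * u i)\<^sup>2"
    using a_nonneg u by (intro sum_power2_le_power2_sum) simp
  finally show "\<epsilon> * (\<Sum>i\<in>S. a i * (u i)\<^sup>2) \<le> (\<Sum>i\<in>S. a i * u i)\<^sup>2" .
  have "S \<noteq> {}"
    using a_sum by auto
  then show "(\<Sum>i\<in>S. a i * u i)\<^sup>2 \<le> (\<Sum>i\<in>S. a i * (u i)\<^sup>2)"
    using convex_on_sum[OF S _ convex_power2 a_sum, of u] a_nonneg by simp
qed

lemma integral_mixture_power2_bounds:
  fixes k :: "'i \<Rightarrow> 'b \<Rightarrow> real"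
  assumes S: "finite S" and eps: "0 \<le> \<epsilon>" and a_ge: "\<And>i. i \<in> S \<Longrightarrow> \<epsilon> \<le> a i"
    and a_sum: "(\<Sum>i\<in>S. a i) = 1"
    and k_meas: "\<And>i. i \<in> S \<Longrightarrow> k i \<in> borel_measurable M"
    and k_nonneg: "\<And>i x. i \<in> S \<Longrightarrow> 0 \<le> k i x"
    and k_int: "\<And>i. i \<in> S \<Longrightarrow> integrable M (\<lambda>x. (k i x)\<^sup>2)"
    and k_integral: "\<And>i. i \<in> S \<Longrightarrow> (\<integral>x. (k i x)\<^sup>2 \<partial>M) = C"
  shows "\<epsilon> * C \<le> (\<integral>x. (\<Sum>i\<in>S. a i * k i x)\<^sup>2 \<partial>M)"
    and "(\<integral>x. (\<Sum>i\<in>S. a i * k i x)\<^sup>2 \<partial>M) \<le> C"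
proof -
  define B where "B x = (\<Sum>i\<in>S. a i * (k i x)\<^sup>2)" for x
  have bounds: "\<epsilon> * B x \<le> (\<Sum>i\<in>S. a i * k i x)\<^sup>2" "(\<Sum>i\<in>S. a i * k i x)\<^sup>2 \<le> B x" for x
    unfolding B_def using mixture_power2_bounds[OF S eps a_ge a_sum, of "\<lambda>i. k i x"] k_nonneg by auto
  have B_int: "integrable M B"
    unfolding B_def using k_int by auto
  have B_integral: "(\<integral>x. B x \<partial>M) = C"
    unfolding B_def using k_int k_integral a_sum by (simp flip: sum_distrib_right)
  have "(\<lambda>x. (\<Sum>i\<in>S. a i * k i x)\<^sup>2) \<in> borel_measurable M"
    using k_meas by measurable
  then have mixture_int: "integrable M (\<lambda>x. (\<Sum>i\<in>S. a i * k i x)\<^sup>2)"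
    using bounds(2) by (intro Bochner_Integration.integrable_bound[OF B_int])
      (auto intro!: AE_I2 order_trans[OF _ abs_ge_self])
  have "\<epsilon> * C = (\<integral>x. \<epsilon> * B x \<partial>M)"
    using B_integral by simp
  also have "\<dots> \<le> (\<integral>x. (\<Sum>i\<in>S. a i * k i x)\<^sup>2 \<partial>M)"
    by (intro integral_mono integrable_mult_right B_int mixture_int bounds(1))
  finally show "\<epsilon> * C \<le> (\<integral>x. (\<Sum>i\<in>S. a i * k i x)\<^sup>2 \<partial>M)" .
  show "(\<integral>x. (\<Sum>i\<in>S. a i * k i x)\<^sup>2 \<partial>M) \<le> C"
    using integral_mono[OF mixture_int B_int] bounds(2) B_integral by simp
qed

lemma integral_kernel_shift_mixture_power2_bounds:
  fixes \<kappa> :: "'a::euclidean_space \<Rightarrow> real" and Z :: "'i \<Rightarrow> 'a"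
  assumes [measurable]: "\<kappa> \<in> borel_measurable borel"
    and \<kappa>_nonneg: "\<And>x. 0 \<le> \<kappa> x" and sq_int: "integrable lborel (\<lambda>x. (\<kappa> x)\<^sup>2)"
    and \<theta>: "0 < \<theta>"
    and S: "finite S" and eps: "0 \<le> \<epsilon>" and a_ge: "\<And>i. i \<in> S \<Longrightarrow> \<epsilon> \<le> a i"
    and a_sum: "(\<Sum>i\<in>S. a i) = 1"
  defines "K \<equiv> \<theta> ^ DIM('a) * (\<integral>x. (\<kappa> x)\<^sup>2 \<partial>lborel)"
  shows "\<epsilon> * K \<le> (\<integral>x. (\<Sum>i\<in>S. a i * kernel_shift \<kappa> \<theta> (Z i) x)\<^sup>2 \<partial>lborel)"
    and "(\<integral>x. (\<Sum>i\<in>S. a i * kernel_shift \<kappa> \<theta> (Z i) x)\<^sup>2 \<partial>lborel) \<le> K"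
proof -
  have "kernel_shift \<kappa> \<theta> z \<in> borel_measurable lborel" for z
    unfolding kernel_shift_def by measurable
  moreover have "0 \<le> kernel_shift \<kappa> \<theta> z x" for z x
    unfolding kernel_shift_def using \<kappa>_nonneg .
  moreover have "integrable lborel (\<lambda>x. (kernel_shift \<kappa> \<theta> z x)\<^sup>2)" for z
    unfolding kernel_shift_power2 using sq_int \<theta> by (intro integrable_kernel_shift) auto
  moreover have "(\<integral>x. (kernel_shift \<kappa> \<theta> z x)\<^sup>2 \<partial>lborel) = K" for z
    unfolding kernel_shift_power2 K_def using integral_kernel_shift[OF sq_int, of \<theta> z] \<theta> by simp
  ultimately show "\<epsilon> * K \<le> (\<integral>x. (\<Sum>i\<in>S. a i * kernel_shift \<kappa> \<theta> (Z i) x)\<^sup>2 \<partial>lborel)"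
    and "(\<integral>x. (\<Sum>i\<in>S. a i * kernel_shift \<kappa> \<theta> (Z i) x)\<^sup>2 \<partial>lborel) \<le> K"
    by (intro integral_mixture_power2_bounds[OF S eps a_ge a_sum]; simp)+
qed

lemma lower_bound_le_one_of_sum_eq_one:
  fixes a :: "'i \<Rightarrow> real"
  assumes "finite S" "0 \<le> \<epsilon>" "\<And>i. i \<in> S \<Longrightarrow> \<epsilon> \<le> a i" "(\<Sum>i\<in>S. a i) = 1"
  shows "\<epsilon> \<le> 1"
proof -
  have "\<epsilon> * real (card S) \<le> 1"
    using sum_mono[of S "\<lambda>_. \<epsilon>" a] assms by (simp add: mult.commute)
  moreover have "1 \<le> card S"
    using assms by (cases "S = {}") (auto simp: Suc_le_eq card_gt_0_iff)
  ultimately show ?thesis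
    using assms mult_left_mono[of 1 "real (card S)" \<epsilon>] by simp
qed

lemma abs_ln_le_of_sandwich:
  fixes \<epsilon> I M :: real
  assumes eps: "0 < \<epsilon>" "\<epsilon> \<le> 1" and "0 \<le> M"
    and lower: "\<epsilon> * M \<le> I" and upper: "I \<le> M"
  shows "\<bar>ln I\<bar> \<le> \<bar>ln M\<bar> + ln (1 / \<epsilon>)"
proof (cases "M = 0")
  case True
  \<comment> \<open>then I = 0 as well, and ln 0 = 0\<close>
  then show ?thesis
    using lower upper eps by simp
next
  case False
  with \<open>0 \<le> M\<close> have "0 < M"
    by simp
  then have "0 < I"
    using lower eps by (meson mult_pos_pos order_less_le_trans)
  have "ln \<epsilon> + ln M \<le> ln I"
    using ln_mono[OF lower] ln_mult_pos[OF eps(1) \<open>0 < M\<close>] \<open>0 < M\<close> eps by simp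
  moreover have "ln I \<le> ln M"
    using \<open>0 < I\<close> upper by simp
  moreover have "ln \<epsilon> \<le> 0"
    using eps by simp
  ultimately show ?thesis
    using eps abs_ge_self[of "ln M"] abs_ge_minus_self[of "ln M"] by (simp add: ln_div abs_le_iff)
qed

lemma abs_ln_divide_power_le:
  fixes K \<theta> :: real
  assumes "0 \<le> K" "0 < \<theta>" "\<theta> \<le> 1"
  shows "\<bar>ln (K / \<theta> ^ d)\<bar> \<le> \<bar>ln K\<bar> + real d * ln (1 / \<theta>)"
proof (cases "K = 0")
  case False
  then have "ln (K / \<theta> ^ d) = ln K + real d * ln (1 / \<theta>)"
    using assms by (simp add: ln_div ln_realpow)
  moreover have "0 \<le> real d * ln (1 / \<theta>)"
    using assms by simp
  ultimately show ?thesis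
    by linarith
qed (use assms in simp)

theorem lemma24:
  fixes \<kappa> :: "'a::euclidean_space \<Rightarrow> real"
    and A \<theta> \<epsilon> :: real
    and n :: nat
    and Z :: "nat \<Rightarrow> 'a"
    and a :: "nat \<Rightarrow> real"
  assumes dens: "is_prob_density \<kappa>"
    and sq_int: "integrable lborel (\<lambda>x. (\<kappa> x)\<^sup>2)"
    and hk: "\<bar>renyi2 \<kappa>\<bar> \<le> A"
    and theta: "0 < \<theta>" "\<theta> < 1"
    and eps: "0 < \<epsilon>"
    and a_ge: "\<forall>i<n. \<epsilon> \<le> a i"
    and a_sum: "(\<Sum>i<n. a i) = 1"
  shows "\<bar>renyi2 (\<lambda>x. (1 / \<theta> ^ DIM('a)) * (\<Sum>i<n. a i * kernel_shift \<kappa> \<theta> (Z i) x))\<bar>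
           \<le> A + real DIM('a) * ln (1 / \<theta>) + 2 * ln (1 / \<epsilon>)"
proof -
  define d where "d = DIM('a)"
  define K where "K = (\<integral>x. (\<kappa> x)\<^sup>2 \<partial>lborel)"
  define I where "I = (\<integral>x. (\<Sum>i<n. a i * kernel_shift \<kappa> \<theta> (Z i) x)\<^sup>2 \<partial>lborel)"
  have "\<kappa> \<in> borel_measurable borel" "\<And>x. 0 \<le> \<kappa> x"
    using dens unfolding is_prob_density_def by auto
  then have I_bounds: "\<epsilon> * (\<theta> ^ d * K) \<le> I" "I \<le> \<theta> ^ d * K"
    using integral_kernel_shift_mixture_power2_bounds[of \<kappa> \<theta> "{..<n}" \<epsilon> a Z] sq_int theta eps a_ge a_sum
    unfolding I_def K_def d_def by auto
  have eps_le_1: "\<epsilon> \<le> 1"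
    using lower_bound_le_one_of_sum_eq_one[of "{..<n}" \<epsilon> a] eps a_ge a_sum by simp
  have "renyi2 (\<lambda>x. (1 / \<theta> ^ d) * (\<Sum>i<n. a i * kernel_shift \<kappa> \<theta> (Z i) x)) = - ln (I / (\<theta> ^ d)\<^sup>2)"
    unfolding renyi2_def I_def power_mult_distrib by (simp add: power_one_over)
  moreover have "\<bar>ln (I / (\<theta> ^ d)\<^sup>2)\<bar> \<le> \<bar>ln (K / \<theta> ^ d)\<bar> + ln (1 / \<epsilon>)"
    using I_bounds theta K_def
    by (intro abs_ln_le_of_sandwich[OF eps eps_le_1]) (auto simp: field_simps power2_eq_square)
  moreover have "\<bar>ln (K / \<theta> ^ d)\<bar> \<le> A + real d * ln (1 / \<theta>)"
    using abs_ln_divide_power_le[of K \<theta> d] hk theta unfolding renyi2_def K_def by simp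
  moreover have "0 \<le> ln (1 / \<epsilon>)"
    using eps eps_le_1 by simp
  ultimately show ?thesis
    unfolding d_def by simp
qed

end
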